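(* Let $\Omega$ be either $\mathbb R^n$ or a cube in $\mathbb R^n$. A measurable function $f$ on $\Omega$ belongs to $\mathcal M_{A_1}(\Omega)$ if and only if $M_\Omega f\in\mathcal M_{A_1}(\Omega)$.
   Context: Cubes have sides parallel to the axes. A weight on a cube $Q$ is an a.e. positive function in $L^1(Q)$; a weight on $\mathbb R^n$ is an a.e. positive function in $L^1_{\mathrm{loc}}(\mathbb R^n)$. $M_\Omega f(x)=\sup\{|Q'|^{-1}\int_{Q'}|f|: Q'\subset\Omega \text{ a cube}, x\in Q'\}$. $A_1(\Omega)$ is the class of weights $w$ on $\Omega$ with $M_\Omega w\le Cw$ a.e. on $\Omega$ for some constant $C$. $\mathcal M_{A_1}(\Omega)$ is the set of measurable $g$ on $\Omega$ for which there exists $w\in A_1(\Omega)$ with $|g|\le w$ a.e. on $\Omega$. *)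

theory Defs
  imports "HOL-Analysis.Analysis"
begin

definition is_cube :: "'a::euclidean_space set \<Rightarrow> bool" where
  "is_cube Q \<longleftrightarrow> (\<exists>a s. s > 0 \<and> Q = cbox a (a + s *\<^sub>R One))"

definition maxfun :: "'a::euclidean_space set \<Rightarrow> ('a \<Rightarrow> real) \<Rightarrow> 'a \<Rightarrow> ennreal" where
  "maxfun \<Omega> f x = (SUP Q \<in> {Q. is_cube Q \<and> Q \<subseteq> \<Omega> \<and> x \<in> Q}.
      (\<integral>\<^sup>+ y. indicator Q y * ennreal \<bar>f y\<bar> \<partial>lebesgue) / emeasure lebesgue Q)"

text \<open>Weight on \<Omega>: measurable, a.e. positive on \<Omega>, integrable on every compact subset of \<Omega>
  (for a closed cube \<Omega> this is L^1(\<Omega>), for \<Omega> = UNIV it is L^1_loc).\<close>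
definition weight_on :: "'a::euclidean_space set \<Rightarrow> ('a \<Rightarrow> real) \<Rightarrow> bool" where
  "weight_on \<Omega> w \<longleftrightarrow> w \<in> borel_measurable (lebesgue_on \<Omega>)
     \<and> (AE x in lebesgue. x \<in> \<Omega> \<longrightarrow> w x > 0)
     \<and> (\<forall>K. compact K \<and> K \<subseteq> \<Omega> \<longrightarrow> set_integrable lebesgue K w)"

definition A1 :: "'a::euclidean_space set \<Rightarrow> ('a \<Rightarrow> real) \<Rightarrow> bool" where
  "A1 \<Omega> w \<longleftrightarrow> weight_on \<Omega> w \<and>
     (\<exists>C::real. AE x in lebesgue. x \<in> \<Omega> \<longrightarrow> maxfun \<Omega> w x \<le> ennreal (C * w x))"

definition M_A1 :: "'a::euclidean_space set \<Rightarrow> ('a \<Rightarrow> real) \<Rightarrow> bool" where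
  "M_A1 \<Omega> g \<longleftrightarrow> g \<in> borel_measurable (lebesgue_on \<Omega>) \<and>
     (\<exists>w. A1 \<Omega> w \<and> (AE x in lebesgue. x \<in> \<Omega> \<longrightarrow> \<bar>g x\<bar> \<le> w x))"

text \<open>The same class for [0,\<infinity>]-valued functions (such as maximal functions).\<close>
definition M_A1_enn :: "'a::euclidean_space set \<Rightarrow> ('a \<Rightarrow> ennreal) \<Rightarrow> bool" where
  "M_A1_enn \<Omega> g \<longleftrightarrow> g \<in> borel_measurable (lebesgue_on \<Omega>) \<and>
     (\<exists>w. A1 \<Omega> w \<and> (AE x in lebesgue. x \<in> \<Omega> \<longrightarrow> g x \<le> ennreal (w x)))"

end

theory Submission
  imports Defs
begin

text \<open>
  If \<open>|f| \<le> w\<close> with \<open>w \<in> A\<^sub>1\<close>, then \<open>M f \<le> M w \<le> C w\<close>, and \<open>C w\<close> is again an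
  \<open>A\<^sub>1\<close> weight. Conversely, if \<open>M f \<le> w\<close> with \<open>w \<in> A\<^sub>1\<close>, then \<open>M f\<close> is finite a.e., so
  every cube in \<open>\<Omega>\<close> contains a point bounding the average of \<open>|f|\<close> over it; hence \<open>f\<close> is
  locally integrable, \<open>w + |f|\<close> is a weight, and
  \<open>M (w + |f|) \<le> M w + M f \<le> (C + 1) w\<close> puts it in \<open>A\<^sub>1\<close>.
  Measurability of \<open>M f\<close> comes from lower semicontinuity relative to \<open>\<Omega>\<close>: a cube
  \<open>Q \<subseteq> \<Omega>\<close> with large average can be enlarged inside \<open>\<Omega>\<close> to a cube that still has large
  average and contains a relative neighbourhood of \<open>Q\<close>.
\<close>

lemma emeasure_lebesgue_cube:
  fixes a :: "'a::euclidean_space"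
  assumes "0 \<le> s"
  shows "emeasure lebesgue (cbox a (a + s *\<^sub>R One)) = ennreal (s ^ DIM('a))"
  using assms by (simp add: emeasure_completion emeasure_lborel_cbox_eq inner_simps)

lemma is_cube_closed: "is_cube Q \<Longrightarrow> closed Q"
  by (auto simp: is_cube_def)

lemma is_cube_sets_lebesgue: "is_cube Q \<Longrightarrow> Q \<in> sets lebesgue"
  by (simp add: borel_closed is_cube_closed)

lemma is_cube_emeasure_pos_finite:
  fixes Q :: "'a::euclidean_space set"
  assumes "is_cube Q"
  shows "0 < emeasure lebesgue Q" "emeasure lebesgue Q < top"
proof -
  obtain a s where "0 < s" "Q = cbox a (a + s *\<^sub>R One)"
    using assms unfolding is_cube_def by blast
  then have "emeasure lebesgue Q = ennreal (s ^ DIM('a))"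
    by (simp only: emeasure_lebesgue_cube less_imp_le)
  with \<open>0 < s\<close> show "0 < emeasure lebesgue Q" "emeasure lebesgue Q < top"
    by simp_all
qed

lemma compact_subset_cube:
  fixes K :: "'a::euclidean_space set"
  assumes "compact K"
  obtains Q where "is_cube Q" "K \<subseteq> Q"
proof -
  obtain R where R: "0 < R" "\<And>x. x \<in> K \<Longrightarrow> norm x \<le> R"
    using compact_imp_bounded[OF assms] by (auto simp: bounded_pos)
  have "is_cube (cbox (- R *\<^sub>R One) (- R *\<^sub>R One + (2 * R) *\<^sub>R One))"
    using R(1) unfolding is_cube_def by (intro exI[of _ "- R *\<^sub>R One"] exI[of _ "2 * R"]) auto
  moreover have "K \<subseteq> cbox (- R *\<^sub>R One) (- R *\<^sub>R One + (2 * R) *\<^sub>R One)"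
  proof
    fix y assume "y \<in> K"
    then have "\<bar>y \<bullet> i\<bar> \<le> R" if "i \<in> Basis" for i
      using R(2) Basis_le_norm[OF that] order_trans by blast
    then show "y \<in> cbox (- R *\<^sub>R One) (- R *\<^sub>R One + (2 * R) *\<^sub>R One)"
      by (auto simp: mem_box inner_simps abs_le_iff minus_le_iff)
  qed
  ultimately show thesis by (rule that)
qed

lemma borel_measurable_indicator_abs:
  fixes g :: "'a::euclidean_space \<Rightarrow> real"
  assumes "g \<in> borel_measurable (lebesgue_on Q)" "Q \<in> sets lebesgue"
  shows "(\<lambda>y. indicator Q y * ennreal \<bar>g y\<bar>) \<in> borel_measurable lebesgue"
proof -
  have "(\<lambda>y. if y \<in> Q then g y else 0) \<in> borel_measurable lebesgue"
    using assms by (rule borel_measurable_if_I)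
  then have "(\<lambda>y. ennreal \<bar>if y \<in> Q then g y else 0\<bar>) \<in> borel_measurable lebesgue"
    by measurable
  then show ?thesis
    by (rule measurable_cong[THEN iffD1, rotated]) (simp add: indicator_def)
qed

section \<open>Averages and the maximal function\<close>

definition avg_abs :: "('a::euclidean_space \<Rightarrow> real) \<Rightarrow> 'a set \<Rightarrow> ennreal" where
  "avg_abs g Q = (\<integral>\<^sup>+ y. indicator Q y * ennreal \<bar>g y\<bar> \<partial>lebesgue) / emeasure lebesgue Q"

lemma avg_abs_abs [simp]: "avg_abs (\<lambda>y. \<bar>g y\<bar>) = avg_abs g"
  by (simp add: avg_abs_def fun_eq_iff)

lemma avg_abs_mono:
  assumes "AE y in lebesgue. y \<in> Q \<longrightarrow> \<bar>f y\<bar> \<le> \<bar>g y\<bar>"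
  shows "avg_abs f Q \<le> avg_abs g Q"
  unfolding avg_abs_def
proof (rule divide_right_mono_ennreal, rule nn_integral_mono_AE)
  show "AE y in lebesgue. indicator Q y * ennreal \<bar>f y\<bar> \<le> indicator Q y * ennreal \<bar>g y\<bar>"
    using assms by eventually_elim (auto simp: indicator_def ennreal_leI)
qed

lemma avg_abs_add_le:
  assumes "g \<in> borel_measurable (lebesgue_on Q)" "h \<in> borel_measurable (lebesgue_on Q)"
    and "Q \<in> sets lebesgue"
  shows "avg_abs (\<lambda>y. g y + h y) Q \<le> avg_abs g Q + avg_abs h Q"
proof -
  have "(\<integral>\<^sup>+ y. indicator Q y * ennreal \<bar>g y + h y\<bar> \<partial>lebesgue)
      \<le> (\<integral>\<^sup>+ y. indicator Q y * ennreal \<bar>g y\<bar> + indicator Q y * ennreal \<bar>h y\<bar> \<partial>lebesgue)"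
  proof (rule nn_integral_mono)
    fix y
    have "ennreal \<bar>g y + h y\<bar> \<le> ennreal (\<bar>g y\<bar> + \<bar>h y\<bar>)"
      by (intro ennreal_leI abs_triangle_ineq)
    then show "indicator Q y * ennreal \<bar>g y + h y\<bar>
        \<le> indicator Q y * ennreal \<bar>g y\<bar> + indicator Q y * ennreal \<bar>h y\<bar>"
      by (simp add: indicator_def ennreal_plus)
  qed
  also have "\<dots> = (\<integral>\<^sup>+ y. indicator Q y * ennreal \<bar>g y\<bar> \<partial>lebesgue)
      + (\<integral>\<^sup>+ y. indicator Q y * ennreal \<bar>h y\<bar> \<partial>lebesgue)"
    using assms by (intro nn_integral_add borel_measurable_indicator_abs) auto
  finally show ?thesis
    unfolding avg_abs_def add_divide_distrib_ennreal[symmetric] by (rule divide_right_mono_ennreal)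
qed

lemma avg_abs_cmult:
  assumes "g \<in> borel_measurable (lebesgue_on Q)" "Q \<in> sets lebesgue" "0 \<le> c"
  shows "avg_abs (\<lambda>y. c * g y) Q = ennreal c * avg_abs g Q"
proof -
  have "(\<integral>\<^sup>+ y. indicator Q y * ennreal \<bar>c * g y\<bar> \<partial>lebesgue)
      = (\<integral>\<^sup>+ y. ennreal c * (indicator Q y * ennreal \<bar>g y\<bar>) \<partial>lebesgue)"
    using assms(3) by (intro nn_integral_cong) (simp add: abs_mult ennreal_mult mult.left_commute)
  also have "\<dots> = ennreal c * (\<integral>\<^sup>+ y. indicator Q y * ennreal \<bar>g y\<bar> \<partial>lebesgue)"
    using assms by (intro nn_integral_cmult borel_measurable_indicator_abs)
  finally show ?thesis
    by (simp add: avg_abs_def ennreal_times_divide)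
qed

lemma maxfun_eq_SUP_avg_abs:
  "maxfun \<Omega> g x = (SUP Q \<in> {Q. is_cube Q \<and> Q \<subseteq> \<Omega> \<and> x \<in> Q}. avg_abs g Q)"
  by (simp add: maxfun_def avg_abs_def)

lemma avg_abs_le_maxfun: "is_cube Q \<Longrightarrow> Q \<subseteq> \<Omega> \<Longrightarrow> x \<in> Q \<Longrightarrow> avg_abs g Q \<le> maxfun \<Omega> g x"
  unfolding maxfun_eq_SUP_avg_abs by (rule SUP_upper) auto

lemma less_maxfun_iff:
  "\<tau> < maxfun \<Omega> g x \<longleftrightarrow> (\<exists>Q. is_cube Q \<and> Q \<subseteq> \<Omega> \<and> x \<in> Q \<and> \<tau> < avg_abs g Q)"
  unfolding maxfun_eq_SUP_avg_abs less_SUP_iff by blast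

lemma maxfun_le_iff:
  "maxfun \<Omega> g x \<le> \<tau> \<longleftrightarrow> (\<forall>Q. is_cube Q \<and> Q \<subseteq> \<Omega> \<and> x \<in> Q \<longrightarrow> avg_abs g Q \<le> \<tau>)"
  unfolding maxfun_eq_SUP_avg_abs SUP_le_iff by blast

lemma maxfun_abs [simp]: "maxfun \<Omega> (\<lambda>y. \<bar>g y\<bar>) = maxfun \<Omega> g"
  by (intro ext) (simp add: maxfun_eq_SUP_avg_abs)

lemma maxfun_mono:
  assumes "AE y in lebesgue. y \<in> \<Omega> \<longrightarrow> \<bar>f y\<bar> \<le> \<bar>g y\<bar>"
  shows "maxfun \<Omega> f x \<le> maxfun \<Omega> g x"
  unfolding maxfun_le_iff
proof (intro allI impI)
  fix Q assume Q: "is_cube Q \<and> Q \<subseteq> \<Omega> \<and> x \<in> Q"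
  have "AE y in lebesgue. y \<in> Q \<longrightarrow> \<bar>f y\<bar> \<le> \<bar>g y\<bar>"
    using assms by eventually_elim (use Q in auto)
  then have "avg_abs f Q \<le> avg_abs g Q"
    by (rule avg_abs_mono)
  also have "\<dots> \<le> maxfun \<Omega> g x"
    using Q by (intro avg_abs_le_maxfun) auto
  finally show "avg_abs f Q \<le> maxfun \<Omega> g x" .
qed

lemma maxfun_add_le:
  assumes "g \<in> borel_measurable (lebesgue_on \<Omega>)" "h \<in> borel_measurable (lebesgue_on \<Omega>)"
  shows "maxfun \<Omega> (\<lambda>y. g y + h y) x \<le> maxfun \<Omega> g x + maxfun \<Omega> h x"
  unfolding maxfun_le_iff
proof (intro allI impI)
  fix Q assume Q: "is_cube Q \<and> Q \<subseteq> \<Omega> \<and> x \<in> Q"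
  have "avg_abs (\<lambda>y. g y + h y) Q \<le> avg_abs g Q + avg_abs h Q"
    using Q assms measurable_restrict_mono[of _ lebesgue \<Omega> _ Q]
    by (intro avg_abs_add_le is_cube_sets_lebesgue) auto
  also have "\<dots> \<le> maxfun \<Omega> g x + maxfun \<Omega> h x"
    using Q by (intro add_mono avg_abs_le_maxfun) auto
  finally show "avg_abs (\<lambda>y. g y + h y) Q \<le> maxfun \<Omega> g x + maxfun \<Omega> h x" .
qed

lemma maxfun_cmult:
  assumes "g \<in> borel_measurable (lebesgue_on \<Omega>)" "0 \<le> c"
  shows "maxfun \<Omega> (\<lambda>y. c * g y) x = ennreal c * maxfun \<Omega> g x"
  unfolding maxfun_eq_SUP_avg_abs SUP_mult_left_ennreal
proof (rule SUP_cong[OF refl])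
  fix Q assume Q: "Q \<in> {Q. is_cube Q \<and> Q \<subseteq> \<Omega> \<and> x \<in> Q}"
  then have "g \<in> borel_measurable (lebesgue_on Q)"
    using measurable_restrict_mono[OF assms(1)] by blast
  with Q assms(2) show "avg_abs (\<lambda>y. c * g y) Q = ennreal c * avg_abs g Q"
    by (blast intro: avg_abs_cmult is_cube_sets_lebesgue)
qed

section \<open>Lower semicontinuity of the maximal function\<close>

lemma less_divide_ennreal_iff:
  fixes a c x :: ennreal
  assumes "0 < c" "c < top"
  shows "x < a / c \<longleftrightarrow> x * c < a"
  by (metis assms divide_ennreal_def divide_less_ennreal ennreal_mult_eq_top_iff
      mult_divide_eq_ennreal order_less_imp_not_less)

lemma eventually_less_divide_power:
  fixes \<tau> I :: ennreal
  assumes "0 < t" "\<tau> < I / ennreal (t ^ n)"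
  shows "eventually (\<lambda>r. \<tau> < I / ennreal (r ^ n)) (nhds t)"
proof -
  have "\<tau> < top"
    using assms(2) top.not_eq_extremum by fastforce
  then have "((\<lambda>r. \<tau> * ennreal (r ^ n)) \<longlongrightarrow> \<tau> * ennreal (t ^ n)) (nhds t)"
    by (intro ennreal_tendsto_cmult tendsto_ennrealI tendsto_intros filterlim_ident)
  moreover have "\<tau> * ennreal (t ^ n) < I"
    using assms by (simp add: less_divide_ennreal_iff[symmetric])
  ultimately have "eventually (\<lambda>r. \<tau> * ennreal (r ^ n) < I) (nhds t)"
    by (rule order_tendstoD)
  moreover have "eventually (\<lambda>r. 0 < r) (nhds t)"
    using order_tendstoD(1)[OF filterlim_ident assms(1)] .
  ultimately show ?thesis
    by eventually_elim (simp add: less_divide_ennreal_iff)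
qed

lemma exists_interpolation_less_divide_power:
  fixes \<tau> I :: ennreal
  assumes "0 < t" "\<tau> < I / ennreal (t ^ n)"
  obtains l where "0 < l" "l < 1" "\<tau> < I / ennreal (((1 - l) * t + l * s) ^ n)"
proof -
  have "((\<lambda>l. (1 - l) * t + l * s) \<longlongrightarrow> t) (at_right 0)"
    by (auto intro!: tendsto_eq_intros)
  with eventually_less_divide_power[OF assms]
  have "eventually (\<lambda>l. \<tau> < I / ennreal (((1 - l) * t + l * s) ^ n)) (at_right 0)"
    by (rule eventually_compose_filterlim[where P = "\<lambda>r. \<tau> < I / ennreal (r ^ n)"])
  moreover have "eventually (\<lambda>l. l \<in> {0<..<1}) (at_right (0::real))"
    by (rule eventually_at_right_real) simp
  ultimately have "eventually (\<lambda>l. \<tau> < I / ennreal (((1 - l) * t + l * s) ^ n) \<and> l \<in> {0<..<1})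
      (at_right 0)"
    by (rule eventually_conj)
  then show thesis
    using that eventually_happens'[OF trivial_limit_at_right_real] by auto
qed

lemma cbox_relative_nbhd:
  fixes u v c d p q :: "'a::euclidean_space"
  assumes "\<And>i. i \<in> Basis \<Longrightarrow> c \<bullet> i < u \<bullet> i \<or> c \<bullet> i \<le> p \<bullet> i"
    and "\<And>i. i \<in> Basis \<Longrightarrow> v \<bullet> i < d \<bullet> i \<or> q \<bullet> i \<le> d \<bullet> i"
  shows "\<exists>V. open V \<and> cbox u v \<subseteq> V \<and> V \<inter> cbox p q \<subseteq> cbox c d"
proof -
  define L where "L i = (if c \<bullet> i < u \<bullet> i then c \<bullet> i else u \<bullet> i - 1)" for i
  define U where "U i = (if v \<bullet> i < d \<bullet> i then d \<bullet> i else v \<bullet> i + 1)" for i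
  define V where "V = (\<Inter>i\<in>Basis. {y. L i < y \<bullet> i} \<inter> {y. y \<bullet> i < U i})"
  have "open V"
    unfolding V_def by (intro open_INT finite_Basis ballI open_Int
        open_halfspace_component_gt open_halfspace_component_lt)
  moreover have "cbox u v \<subseteq> V"
    by (fastforce simp: V_def L_def U_def mem_box)
  moreover have "V \<inter> cbox p q \<subseteq> cbox c d"
  proof
    fix y assume y: "y \<in> V \<inter> cbox p q"
    have "c \<bullet> i \<le> y \<bullet> i \<and> y \<bullet> i \<le> d \<bullet> i" if "i \<in> Basis" for i
      using y assms[OF that] that by (auto simp: V_def L_def U_def mem_box split: if_splits)
    then show "y \<in> cbox c d"
      by (simp add: mem_box)
  qed
  ultimately show ?thesis
    by blast
qed

lemma box_interpolation:
  fixes u v p q :: "'a::euclidean_space"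
  assumes sub: "cbox u v \<subseteq> cbox p q" and ne: "cbox u v \<noteq> {}" and l: "0 < l" "l \<le> 1"
  defines "B \<equiv> cbox ((1 - l) *\<^sub>R u + l *\<^sub>R p) ((1 - l) *\<^sub>R v + l *\<^sub>R q)"
  shows "cbox u v \<subseteq> B" "B \<subseteq> cbox p q"
    and "\<exists>V. open V \<and> cbox u v \<subseteq> V \<and> V \<inter> cbox p q \<subseteq> B"
proof -
  define c d where "c = (1 - l) *\<^sub>R u + l *\<^sub>R p" and "d = (1 - l) *\<^sub>R v + l *\<^sub>R q"
  have B: "B = cbox c d"
    by (simp add: B_def c_def d_def)
  have cd: "p \<bullet> i \<le> c \<bullet> i" "c \<bullet> i \<le> u \<bullet> i" "u \<bullet> i \<le> v \<bullet> i" "v \<bullet> i \<le> d \<bullet> i" "d \<bullet> i \<le> q \<bullet> i"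
    "c \<bullet> i < u \<bullet> i \<or> c \<bullet> i \<le> p \<bullet> i" "v \<bullet> i < d \<bullet> i \<or> q \<bullet> i \<le> d \<bullet> i"
    if i: "i \<in> Basis" for i
  proof -
    have pu: "p \<bullet> i \<le> u \<bullet> i" and uv: "u \<bullet> i \<le> v \<bullet> i" and vq: "v \<bullet> i \<le> q \<bullet> i"
      using sub ne i by (auto simp: subset_box box_ne_empty)
    have "0 \<le> l * (u \<bullet> i - p \<bullet> i)" "l * (u \<bullet> i - p \<bullet> i) \<le> u \<bullet> i - p \<bullet> i"
      "p \<bullet> i < u \<bullet> i \<Longrightarrow> 0 < l * (u \<bullet> i - p \<bullet> i)"
      "0 \<le> l * (q \<bullet> i - v \<bullet> i)" "l * (q \<bullet> i - v \<bullet> i) \<le> q \<bullet> i - v \<bullet> i"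
      "v \<bullet> i < q \<bullet> i \<Longrightarrow> 0 < l * (q \<bullet> i - v \<bullet> i)"
      using l pu vq by (simp_all add: mult_left_le_one_le)
    moreover have "c \<bullet> i = u \<bullet> i - l * (u \<bullet> i - p \<bullet> i)" "d \<bullet> i = v \<bullet> i + l * (q \<bullet> i - v \<bullet> i)"
      by (simp_all add: c_def d_def inner_simps algebra_simps)
    ultimately show "p \<bullet> i \<le> c \<bullet> i" "c \<bullet> i \<le> u \<bullet> i" "u \<bullet> i \<le> v \<bullet> i" "v \<bullet> i \<le> d \<bullet> i"
      "d \<bullet> i \<le> q \<bullet> i" "c \<bullet> i < u \<bullet> i \<or> c \<bullet> i \<le> p \<bullet> i" "v \<bullet> i < d \<bullet> i \<or> q \<bullet> i \<le> d \<bullet> i"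
      using uv by auto
  qed
  show "cbox u v \<subseteq> B" "B \<subseteq> cbox p q"
    unfolding B using cd by (auto simp: subset_box)
  show "\<exists>V. open V \<and> cbox u v \<subseteq> V \<and> V \<inter> cbox p q \<subseteq> B"
    unfolding B using cd(6,7) by (rule cbox_relative_nbhd)
qed

lemma larger_cube_nbhd:
  fixes g :: "'a::euclidean_space \<Rightarrow> real"
  assumes "is_cube Q" "is_cube P" "Q \<subseteq> P" "\<tau> < avg_abs g Q"
  obtains Q' V where "is_cube Q'" "Q' \<subseteq> P" "\<tau> < avg_abs g Q'" "open V" "Q \<subseteq> V" "V \<inter> P \<subseteq> Q'"
proof -
  obtain b t where t: "0 < t" and Q: "Q = cbox b (b + t *\<^sub>R One)"
    using assms(1) unfolding is_cube_def by blast
  obtain a s where s: "0 < s" and P: "P = cbox a (a + s *\<^sub>R One)"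
    using assms(2) unfolding is_cube_def by blast
  define I where "I = (\<integral>\<^sup>+ y. indicator Q y * ennreal \<bar>g y\<bar> \<partial>lebesgue)"
  have "t \<le> s"
  proof -
    obtain i :: 'a where "i \<in> Basis"
      using nonempty_Basis by blast
    then show ?thesis
      using assms(3) t by (auto simp: Q P subset_box inner_simps)
  qed
  have "emeasure lebesgue Q = ennreal (t ^ DIM('a))"
    unfolding Q using t by (intro emeasure_lebesgue_cube) simp
  then have "\<tau> < I / ennreal (t ^ DIM('a))"
    using assms(4) by (simp add: avg_abs_def I_def)
  then obtain l where l: "0 < l" "l < 1" and avg: "\<tau> < I / ennreal (((1 - l) * t + l * s) ^ DIM('a))"
    by (rule exists_interpolation_less_divide_power[OF t])
  \<comment> \<open>\<open>Q'\<close> interpolates between \<open>Q\<close> and \<open>P\<close>; it contains \<open>Q\<close>, so for small \<open>l\<close> its average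
    is at least \<open>I / r\<^sup>n\<close>, which is close to the average over \<open>Q\<close>.\<close>
  define r c where "r = (1 - l) * t + l * s" and "c = (1 - l) *\<^sub>R b + l *\<^sub>R a"
  define Q' where "Q' = cbox c (c + r *\<^sub>R One)"
  have "t \<le> r"
    using \<open>t \<le> s\<close> l by (simp add: r_def algebra_simps)
  have "Q' = cbox ((1 - l) *\<^sub>R b + l *\<^sub>R a) ((1 - l) *\<^sub>R (b + t *\<^sub>R One) + l *\<^sub>R (a + s *\<^sub>R One))"
    by (simp add: Q'_def c_def r_def algebra_simps)
  moreover have "cbox b (b + t *\<^sub>R One) \<noteq> {}"
    using t by (simp add: box_ne_empty inner_simps)
  ultimately have QQ': "Q \<subseteq> Q'" and "Q' \<subseteq> P" and "\<exists>V. open V \<and> Q \<subseteq> V \<and> V \<inter> P \<subseteq> Q'"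
    using box_interpolation[of b "b + t *\<^sub>R One" a "a + s *\<^sub>R One" l] assms(3) l
    unfolding Q P by simp_all
  moreover have "is_cube Q'"
    using t \<open>t \<le> r\<close> unfolding Q'_def is_cube_def by (intro exI[of _ c] exI[of _ r]) simp
  moreover have "\<tau> < avg_abs g Q'"
  proof -
    have "I \<le> (\<integral>\<^sup>+ y. indicator Q' y * ennreal \<bar>g y\<bar> \<partial>lebesgue)"
      unfolding I_def using QQ' by (intro nn_integral_mono) (auto simp: indicator_def)
    moreover have "emeasure lebesgue Q' = ennreal (r ^ DIM('a))"
      unfolding Q'_def using t \<open>t \<le> r\<close> by (intro emeasure_lebesgue_cube) simp
    ultimately have "I / ennreal (r ^ DIM('a)) \<le> avg_abs g Q'"
      unfolding avg_abs_def by (simp add: divide_right_mono_ennreal)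
    with avg show ?thesis
      unfolding r_def by order
  qed
  ultimately show thesis
    using that by blast
qed

lemma cube_relative_nbhd:
  fixes Q :: "'a::euclidean_space set"
  assumes "\<Omega> = UNIV \<or> is_cube \<Omega>" "is_cube Q" "Q \<subseteq> \<Omega>"
  obtains P U where "is_cube P" "Q \<subseteq> P" "P \<subseteq> \<Omega>" "open U" "Q \<subseteq> U" "U \<inter> \<Omega> \<subseteq> P"
proof (cases "is_cube \<Omega>")
  case True
  show thesis
    by (rule that[of \<Omega> UNIV]) (use True assms(3) in auto)
next
  case False
  obtain b t where t: "0 < t" and Q: "Q = cbox b (b + t *\<^sub>R One)"
    using assms(2) unfolding is_cube_def by blast
  define a where "a = b - One"
  show thesis
  proof (rule that[of "cbox a (a + (t + 2) *\<^sub>R One)" "box a (a + (t + 2) *\<^sub>R One)"])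
    show "is_cube (cbox a (a + (t + 2) *\<^sub>R One))"
      unfolding is_cube_def using t by (intro exI[of _ a] exI[of _ "t + 2"]) simp
    show "Q \<subseteq> box a (a + (t + 2) *\<^sub>R One)"
      unfolding Q a_def subset_box(2) using t by (simp add: inner_simps)
    then show "Q \<subseteq> cbox a (a + (t + 2) *\<^sub>R One)"
      using box_subset_cbox by blast
  qed (use False assms(1) box_subset_cbox in auto)
qed

lemma eventually_less_maxfun:
  assumes "\<Omega> = UNIV \<or> is_cube \<Omega>" "\<tau> < maxfun \<Omega> g x"
  shows "eventually (\<lambda>y. y \<in> \<Omega> \<longrightarrow> \<tau> < maxfun \<Omega> g y) (nhds x)"
proof -
  obtain Q where Q: "is_cube Q" "Q \<subseteq> \<Omega>" "x \<in> Q" "\<tau> < avg_abs g Q"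
    using assms(2) less_maxfun_iff by blast
  obtain P U where P: "is_cube P" "Q \<subseteq> P" "P \<subseteq> \<Omega>" "open U" "Q \<subseteq> U" "U \<inter> \<Omega> \<subseteq> P"
    using cube_relative_nbhd[OF assms(1) Q(1,2)] by blast
  obtain Q' V where Q': "is_cube Q'" "Q' \<subseteq> P" "\<tau> < avg_abs g Q'" "open V" "Q \<subseteq> V" "V \<inter> P \<subseteq> Q'"
    using larger_cube_nbhd[OF Q(1) P(1,2) Q(4)] by blast
  have "\<tau> < maxfun \<Omega> g y" if "y \<in> U \<inter> V \<inter> \<Omega>" for y
  proof -
    have "y \<in> Q'" "Q' \<subseteq> \<Omega>"
      using that P(6) Q'(1,2,6) P(3) by blast+
    then show ?thesis
      unfolding less_maxfun_iff using Q' by blast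
  qed
  moreover have "open (U \<inter> V)" "x \<in> U \<inter> V"
    using P(4,5) Q(3) Q'(4,5) by auto
  ultimately show ?thesis
    unfolding eventually_nhds by blast
qed

lemma maxfun_measurable:
  assumes "\<Omega> = UNIV \<or> is_cube \<Omega>"
  shows "maxfun \<Omega> g \<in> borel_measurable (lebesgue_on \<Omega>)"
proof (rule borel_measurableI_greater)
  fix \<tau>
  define U where "U = interior {y. y \<in> \<Omega> \<longrightarrow> \<tau> < maxfun \<Omega> g y}"
  have "{x \<in> space (lebesgue_on \<Omega>). \<tau> < maxfun \<Omega> g x} = \<Omega> \<inter> U"
    using eventually_less_maxfun[OF assms] interior_subset
    by (fastforce simp: U_def space_restrict_space eventually_nhds intro: interiorI)
  also have "\<dots> \<in> sets (lebesgue_on \<Omega>)"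
    unfolding sets_restrict_space U_def by (intro imageI) (simp add: borel_open)
  finally show "{x \<in> space (lebesgue_on \<Omega>). \<tau> < maxfun \<Omega> g x} \<in> sets (lebesgue_on \<Omega>)" .
qed

section \<open>Local integrability and weights\<close>

lemma set_integrable_of_maxfun_finite:
  fixes f :: "'a::euclidean_space \<Rightarrow> real"
  assumes \<Omega>: "\<Omega> = UNIV \<or> is_cube \<Omega>" and f: "f \<in> borel_measurable (lebesgue_on \<Omega>)"
    and fin: "AE x in lebesgue. x \<in> \<Omega> \<longrightarrow> maxfun \<Omega> f x < top"
    and K: "compact K" "K \<subseteq> \<Omega>"
  shows "set_integrable lebesgue K f"
proof -
  obtain Q where Q: "is_cube Q" "K \<subseteq> Q" "Q \<subseteq> \<Omega>"
  proof (cases "is_cube \<Omega>")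
    case True
    show thesis
      by (rule that[OF True K(2) order.refl])
  next
    case False
    obtain Q where "is_cube Q" "K \<subseteq> Q"
      by (rule compact_subset_cube[OF K(1)])
    moreover have "Q \<subseteq> \<Omega>"
      using False \<Omega> by simp
    ultimately show thesis
      by (rule that)
  qed
  have Q_sets: "Q \<in> sets lebesgue"
    using Q(1) by (rule is_cube_sets_lebesgue)
  have "\<exists>x\<in>Q. maxfun \<Omega> f x < top"
  proof (rule ccontr)
    assume none: "\<not> (\<exists>x\<in>Q. maxfun \<Omega> f x < top)"
    from fin have "AE x in lebesgue. x \<notin> Q"
      by eventually_elim (use none Q(3) in blast)
    then have "Q \<in> null_sets lebesgue"
      using AE_iff_null_sets[OF Q_sets] by blast
    then show False
      using is_cube_emeasure_pos_finite(1)[OF Q(1)] by (simp add: null_setsD1)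
  qed
  then obtain x where x: "x \<in> Q" "maxfun \<Omega> f x < top"
    by blast
  have "avg_abs f Q < top"
    using avg_abs_le_maxfun[OF Q(1,3) x(1)] x(2) by (rule order.strict_trans1)
  then have I: "(\<integral>\<^sup>+ y. indicator Q y * ennreal \<bar>f y\<bar> \<partial>lebesgue) \<noteq> top"
    using is_cube_emeasure_pos_finite(2)[OF Q(1)]
    by (auto simp: avg_abs_def ennreal_top_divide split: if_splits)
  have "set_integrable lebesgue Q f"
    unfolding set_integrable_def
  proof (rule integrableI_bounded)
    have "f \<in> borel_measurable (lebesgue_on Q)"
      using measurable_restrict_mono[OF f Q(3)] .
    then show "(\<lambda>y. indicator Q y *\<^sub>R f y) \<in> borel_measurable lebesgue"
      unfolding indicator_scaleR_eq_if using Q_sets by (rule borel_measurable_if_I)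
    have "(\<integral>\<^sup>+ y. ennreal (norm (indicator Q y *\<^sub>R f y)) \<partial>lebesgue)
        = (\<integral>\<^sup>+ y. indicator Q y * ennreal \<bar>f y\<bar> \<partial>lebesgue)"
      by (intro nn_integral_cong) (simp add: indicator_def)
    with I show "(\<integral>\<^sup>+ y. ennreal (norm (indicator Q y *\<^sub>R f y)) \<partial>lebesgue) < \<infinity>"
      by (simp add: top.not_eq_extremum)
  qed
  moreover have "K \<in> sets lebesgue"
    using K(1) by (simp add: borel_compact)
  ultimately show ?thesis
    using Q(2) by (rule set_integrable_subset)
qed

lemma A1_maxfun_le:
  assumes "A1 \<Omega> w"
  obtains C where "0 < C" "AE x in lebesgue. x \<in> \<Omega> \<longrightarrow> maxfun \<Omega> w x \<le> ennreal (C * w x)"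
proof -
  obtain C where C: "AE x in lebesgue. x \<in> \<Omega> \<longrightarrow> maxfun \<Omega> w x \<le> ennreal (C * w x)"
    using assms unfolding A1_def by blast
  have "AE x in lebesgue. x \<in> \<Omega> \<longrightarrow> w x > 0"
    using assms unfolding A1_def weight_on_def by blast
  with C have "AE x in lebesgue. x \<in> \<Omega> \<longrightarrow> maxfun \<Omega> w x \<le> ennreal (max C 1 * w x)"
  proof eventually_elim
    case (elim x)
    then show ?case
      using mult_right_mono[of C "max C 1" "w x"] by (auto intro: order_trans ennreal_leI)
  qed
  then show thesis
    by (rule that[rotated]) simp
qed

lemma weight_on_cmult:
  assumes "weight_on \<Omega> w" "0 < c"
  shows "weight_on \<Omega> (\<lambda>x. c * w x)"
  using assms unfolding weight_on_def by (auto elim!: AE_mp)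

lemma weight_on_add_nonneg:
  assumes "weight_on \<Omega> w" "h \<in> borel_measurable (lebesgue_on \<Omega>)" "\<And>x. 0 \<le> h x"
    and "\<And>K. compact K \<Longrightarrow> K \<subseteq> \<Omega> \<Longrightarrow> set_integrable lebesgue K h"
  shows "weight_on \<Omega> (\<lambda>x. w x + h x)"
  using assms unfolding weight_on_def by (auto elim!: AE_mp intro: add_pos_nonneg)

lemma A1_cmult:
  assumes "A1 \<Omega> w" "0 < c"
  shows "A1 \<Omega> (\<lambda>x. c * w x)"
proof -
  have w: "weight_on \<Omega> w"
    using assms(1) unfolding A1_def by blast
  obtain C where C: "AE x in lebesgue. x \<in> \<Omega> \<longrightarrow> maxfun \<Omega> w x \<le> ennreal (C * w x)"
    using assms(1) unfolding A1_def by blast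
  have "AE x in lebesgue. x \<in> \<Omega> \<longrightarrow> maxfun \<Omega> (\<lambda>x. c * w x) x \<le> ennreal (C * (c * w x))"
    using C
  proof eventually_elim
    case (elim x)
    show ?case
    proof
      assume "x \<in> \<Omega>"
      have "maxfun \<Omega> (\<lambda>x. c * w x) x = ennreal c * maxfun \<Omega> w x"
        using w assms(2) by (intro maxfun_cmult) (auto simp: weight_on_def)
      also have "\<dots> \<le> ennreal c * ennreal (C * w x)"
        using elim \<open>x \<in> \<Omega>\<close> by (intro mult_left_mono) auto
      also have "\<dots> = ennreal (C * (c * w x))"
        using assms(2) by (simp add: ennreal_mult'[symmetric] mult.left_commute)
      finally show "maxfun \<Omega> (\<lambda>x. c * w x) x \<le> ennreal (C * (c * w x))" .
    qed
  qed
  then show ?thesis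
    using weight_on_cmult[OF w assms(2)] unfolding A1_def by blast
qed

lemma A1_add:
  assumes w: "A1 \<Omega> w" and h: "h \<in> borel_measurable (lebesgue_on \<Omega>)" "\<And>x. 0 \<le> h x"
    and h_int: "\<And>K. compact K \<Longrightarrow> K \<subseteq> \<Omega> \<Longrightarrow> set_integrable lebesgue K h"
    and h_max: "AE x in lebesgue. x \<in> \<Omega> \<longrightarrow> maxfun \<Omega> h x \<le> ennreal (w x)"
  shows "A1 \<Omega> (\<lambda>x. w x + h x)"
proof -
  have w_weight: "weight_on \<Omega> w"
    using w unfolding A1_def by blast
  obtain C where C: "0 < C" "AE x in lebesgue. x \<in> \<Omega> \<longrightarrow> maxfun \<Omega> w x \<le> ennreal (C * w x)"
    by (rule A1_maxfun_le[OF w])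
  have "AE x in lebesgue. x \<in> \<Omega> \<longrightarrow> 0 < w x"
    using w_weight unfolding weight_on_def by blast
  with C(2) h_max
  have "AE x in lebesgue. x \<in> \<Omega> \<longrightarrow> maxfun \<Omega> (\<lambda>x. w x + h x) x \<le> ennreal ((C + 1) * (w x + h x))"
  proof eventually_elim
    case (elim x)
    show ?case
    proof
      assume "x \<in> \<Omega>"
      have "maxfun \<Omega> (\<lambda>x. w x + h x) x \<le> maxfun \<Omega> w x + maxfun \<Omega> h x"
        using w_weight h(1) by (intro maxfun_add_le) (simp_all add: weight_on_def)
      also have "\<dots> \<le> ennreal (C * w x) + ennreal (w x)"
        using elim \<open>x \<in> \<Omega>\<close> by (intro add_mono) auto
      also have "\<dots> = ennreal (C * w x + w x)"
        using C(1) elim \<open>x \<in> \<Omega>\<close> by (intro ennreal_plus[symmetric]) auto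
      also have "C * w x + w x = (C + 1) * w x"
        by (simp add: distrib_right)
      also have "\<dots> \<le> ennreal ((C + 1) * (w x + h x))"
        using C(1) h(2)[of x] by (intro ennreal_leI mult_left_mono) simp_all
      finally show "maxfun \<Omega> (\<lambda>x. w x + h x) x \<le> ennreal ((C + 1) * (w x + h x))" .
    qed
  qed
  then show ?thesis
    using weight_on_add_nonneg[OF w_weight h h_int] unfolding A1_def by blast
qed

lemma M_A1_enn_maxfun_if_M_A1:
  assumes "\<Omega> = UNIV \<or> is_cube \<Omega>" "M_A1 \<Omega> f"
  shows "M_A1_enn \<Omega> (maxfun \<Omega> f)"
proof -
  obtain w where w: "A1 \<Omega> w" and f_le: "AE x in lebesgue. x \<in> \<Omega> \<longrightarrow> \<bar>f x\<bar> \<le> w x"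
    using assms(2) unfolding M_A1_def by blast
  obtain C where C: "0 < C" "AE x in lebesgue. x \<in> \<Omega> \<longrightarrow> maxfun \<Omega> w x \<le> ennreal (C * w x)"
    by (rule A1_maxfun_le[OF w])
  from f_le have "AE x in lebesgue. x \<in> \<Omega> \<longrightarrow> \<bar>f x\<bar> \<le> \<bar>w x\<bar>"
    by eventually_elim auto
  then have Mf_le_Mw: "maxfun \<Omega> f x \<le> maxfun \<Omega> w x" for x
    by (rule maxfun_mono)
  from C(2) have "AE x in lebesgue. x \<in> \<Omega> \<longrightarrow> maxfun \<Omega> f x \<le> ennreal (C * w x)"
    by eventually_elim (use Mf_le_Mw order_trans in blast)
  then show ?thesis
    unfolding M_A1_enn_def using maxfun_measurable[OF assms(1)] A1_cmult[OF w C(1)] by blast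
qed

lemma M_A1_if_M_A1_enn_maxfun:
  assumes "\<Omega> = UNIV \<or> is_cube \<Omega>" "f \<in> borel_measurable (lebesgue_on \<Omega>)"
    and "M_A1_enn \<Omega> (maxfun \<Omega> f)"
  shows "M_A1 \<Omega> f"
proof -
  obtain w where w: "A1 \<Omega> w"
    and Mf_le: "AE x in lebesgue. x \<in> \<Omega> \<longrightarrow> maxfun \<Omega> f x \<le> ennreal (w x)"
    using assms(3) unfolding M_A1_enn_def by blast
  from Mf_le have "AE x in lebesgue. x \<in> \<Omega> \<longrightarrow> maxfun \<Omega> f x < top"
    by eventually_elim (auto simp: order_le_less_trans)
  then have "set_integrable lebesgue K (\<lambda>x. \<bar>f x\<bar>)" if "compact K" "K \<subseteq> \<Omega>" for K
    using set_integrable_of_maxfun_finite[OF assms(1,2) _ that] by (blast intro: set_integrable_abs)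
  \<comment> \<open>Dominating \<open>f\<close> by \<open>w + |f|\<close> instead of \<open>w\<close> avoids needing \<open>|f| \<le> M f\<close> a.e.
    (Lebesgue differentiation).\<close>
  with Mf_le have "A1 \<Omega> (\<lambda>x. w x + \<bar>f x\<bar>)"
    using assms(2) by (intro A1_add[OF w]) simp_all
  moreover have "AE x in lebesgue. x \<in> \<Omega> \<longrightarrow> \<bar>f x\<bar> \<le> w x + \<bar>f x\<bar>"
    using w unfolding A1_def weight_on_def by (auto elim!: AE_mp)
  ultimately show ?thesis
    unfolding M_A1_def using assms(2) by blast
qed

theorem mainTheorem14:
  fixes \<Omega> :: "'a::euclidean_space set" and f :: "'a \<Rightarrow> real"
  assumes "\<Omega> = UNIV \<or> is_cube \<Omega>"
    and "f \<in> borel_measurable (lebesgue_on \<Omega>)"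
  shows "M_A1 \<Omega> f \<longleftrightarrow> M_A1_enn \<Omega> (maxfun \<Omega> f)"
  using assms M_A1_enn_maxfun_if_M_A1 M_A1_if_M_A1_enn_maxfun by blast

end
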